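(* Let $R$ be an associative ring with identity $1$ and with an involution $*$, and let $p,q\in R$ be projections. Then the following statements are equivalent: (1) $1-pq$ is Moore–Penrose invertible; (2) $1-pqp$ is Moore–Penrose invertible; (3) $p-pqp$ is Moore–Penrose invertible; (4) $1-qp$ is Moore–Penrose invertible; (5) $1-qpq$ is Moore–Penrose invertible; (6) $q-qpq$ is Moore–Penrose invertible.
   Context: An involution on $R$ is a map $a\mapsto a^*$ with $(a^* )^*=a$, $(a+b)^*=a^*+b^*$, $(ab)^*=b^*a^*$. An element $a\in R$ is Moore–Penrose (MP) invertible if there exists $b\in R$ with $aba=a$, $bab=b$, $(ab)^*=ab$, $(ba)^*=ba$; such $b$ is unique and denoted $a^{\dagger}$. A projection is an element $p$ with $p^2=p=p^*$. *)

theory Defs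
  imports Main
begin

class ring_invol = ring_1 +
  fixes invol :: "'a \<Rightarrow> 'a"  ("_\<^sup>\<star>" [1000] 999)
  assumes invol_invol: "invol (invol a) = a"
    and invol_add: "invol (a + b) = invol a + invol b"
    and invol_mult: "invol (a * b) = invol b * invol a"
begin

definition MP_inverse :: "'a \<Rightarrow> 'a \<Rightarrow> bool" where
  "MP_inverse a b \<longleftrightarrow> a * b * a = a \<and> b * a * b = b \<and>
     invol (a * b) = a * b \<and> invol (b * a) = b * a"

definition MP_invertible :: "'a \<Rightarrow> bool" where
  "MP_invertible a \<longleftrightarrow> (\<exists>b. MP_inverse a b)"

definition projection :: "'a \<Rightarrow> bool" where
  "projection p \<longleftrightarrow> p * p = p \<and> invol p = p"

end

end

(*
  Write x = p q and y = q p, so that x y = p q p and y x = q p q.  The element 1 - p q factors as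
  u (1 - p q p) with u = 1 - p q + p q p a unit (inverse 1 + p q - p q p), and 1 - q p is its adjoint.
  Since the MP inverses are exactly the {1,3}- and {1,4}-inverses combined, and {1,4}-invertibility is
  preserved by left multiplication with units and turns into {1,3}-invertibility under the
  involution, 1 - p q is MP invertible iff both self-adjoint elements 1 - p q p and 1 - q p q are.
  For self-adjoint elements MP invertibility coincides with the existence of a commuting inner
  inverse (group invertibility), which satisfies Jacobson's lemma (1 - x y versus 1 - y x) and passes
  between 1 - p + a and the corner element a = p a p; applied to a = p - p q p this links (2) and (3).
*)
theory Submission
  imports Defs
begin

context ring_invol
begin

lemma invol_0 [simp]: "invol 0 = 0"
proof -
  have "invol 0 = invol 0 + invol 0"
    using invol_add[of 0 0] by simp
  then show ?thesis by simp
qed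

lemma invol_1 [simp]: "invol 1 = 1"
proof -
  have "invol 1 = invol 1 * invol (invol 1)" by (simp add: invol_invol)
  also have "\<dots> = invol (invol 1 * 1)" by (rule invol_mult[symmetric])
  also have "\<dots> = 1" by (simp add: invol_invol)
  finally show ?thesis .
qed

lemma invol_uminus [simp]: "invol (- a) = - invol a"
proof -
  have "invol a + invol (- a) = 0"
    using invol_add[of a "- a"] by simp
  then show ?thesis by (rule minus_unique[symmetric])
qed

lemma invol_diff [simp]: "invol (a - b) = invol a - invol b"
  by (simp only: diff_conv_add_uminus invol_add invol_uminus)

declare invol_invol [simp] invol_add [simp] invol_mult [simp]

definition has_13_inverse :: "'a \<Rightarrow> bool" where
  "has_13_inverse a \<longleftrightarrow> (\<exists>u. a * u * a = a \<and> invol (a * u) = a * u)"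

definition has_14_inverse :: "'a \<Rightarrow> bool" where
  "has_14_inverse a \<longleftrightarrow> (\<exists>s. a * s * a = a \<and> invol (s * a) = s * a)"

definition has_commuting_inner_inverse :: "'a \<Rightarrow> bool" where
  "has_commuting_inner_inverse a \<longleftrightarrow> (\<exists>z. a * z = z * a \<and> a * z * a = a)"

lemma has_13_inverse_iff_invol: "has_13_inverse a \<longleftrightarrow> has_14_inverse (invol a)"
proof
  assume "has_13_inverse a"
  then obtain u where u: "a * u * a = a" "invol (a * u) = a * u"
    unfolding has_13_inverse_def by blast
  have "invol a * invol u * invol a = invol a"
    using arg_cong[OF u(1), of invol] by (simp add: mult.assoc)
  moreover have "invol (invol u * invol a) = invol u * invol a"
    using u(2) by simp
  ultimately show "has_14_inverse (invol a)"
    unfolding has_14_inverse_def by blast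
next
  assume "has_14_inverse (invol a)"
  then obtain s where s: "invol a * s * invol a = invol a" "invol (s * invol a) = s * invol a"
    unfolding has_14_inverse_def by blast
  have "a * invol s * a = a"
    using arg_cong[OF s(1), of invol] by (simp add: mult.assoc)
  moreover have "invol (a * invol s) = a * invol s"
    using s(2) by simp
  ultimately show "has_13_inverse a"
    unfolding has_13_inverse_def by blast
qed

lemma MP_invertible_iff_13_14: "MP_invertible a \<longleftrightarrow> has_13_inverse a \<and> has_14_inverse a"
proof
  assume "MP_invertible a"
  then show "has_13_inverse a \<and> has_14_inverse a"
    unfolding MP_invertible_def MP_inverse_def has_13_inverse_def has_14_inverse_def by blast
next
  assume "has_13_inverse a \<and> has_14_inverse a"
  then obtain u s where u: "a * u * a = a" "invol (a * u) = a * u"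
    and s: "a * s * a = a" "invol (s * a) = s * a"
    unfolding has_13_inverse_def has_14_inverse_def by blast
  define b where "b = s * a * u"
  have ab: "a * b = a * u"
    unfolding b_def using s(1) by (simp add: mult.assoc[symmetric])
  have ba: "b * a = s * a"
    unfolding b_def using u(1) by (simp add: mult.assoc)
  have "b * a * b = b"
    using ba s(1) unfolding b_def by (metis mult.assoc)
  then have "MP_inverse a b"
    unfolding MP_inverse_def using ab ba u s by simp
  then show "MP_invertible a"
    unfolding MP_invertible_def by blast
qed

lemma MP_invertible_invol_iff: "MP_invertible (invol a) \<longleftrightarrow> MP_invertible a"
  using MP_invertible_iff_13_14 has_13_inverse_iff_invol[of a]
    has_13_inverse_iff_invol[of "invol a"] by auto

lemma has_14_inverse_left_invertible_mult:
  assumes "h * g = 1" and "has_14_inverse m"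
  shows "has_14_inverse (g * m)"
proof -
  obtain s where s: "m * s * m = m" "invol (s * m) = s * m"
    using assms(2) unfolding has_14_inverse_def by blast
  have cancel: "s * h * (g * m) = s * m"
    by (simp add: mult.assoc[symmetric]) (simp add: mult.assoc assms(1))
  then have "g * m * (s * h) * (g * m) = g * m"
    using s(1) by (metis mult.assoc)
  moreover have "invol (s * h * (g * m)) = s * h * (g * m)"
    by (simp only: cancel s(2))
  ultimately show ?thesis
    unfolding has_14_inverse_def by blast
qed

lemma has_14_inverse_unit_mult_iff:
  assumes "h * g = 1" and "g * h = 1"
  shows "has_14_inverse (g * m) \<longleftrightarrow> has_14_inverse m"
proof
  assume "has_14_inverse (g * m)"
  then have "has_14_inverse (h * (g * m))"
    using has_14_inverse_left_invertible_mult assms(2) by blast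
  then show "has_14_inverse m"
    by (simp add: mult.assoc[symmetric] assms(1))
qed (use has_14_inverse_left_invertible_mult assms in blast)

lemma MP_inverse_unique:
  assumes "MP_inverse a b" and "MP_inverse a c"
  shows "b = c"
proof -
  have b: "a * b * a = a" "b * a * b = b" "invol (a * b) = a * b" "invol (b * a) = b * a"
    and c: "a * c * a = a" "c * a * c = c" "invol (a * c) = a * c" "invol (c * a) = c * a"
    using assms unfolding MP_inverse_def by auto
  have "b = b * invol (a * b)"
    using b(2,3) by (simp add: mult.assoc)
  also have "\<dots> = b * invol (a * c * a * b)"
    using c(1) by simp
  also have "\<dots> = b * (invol (a * b) * invol (a * c))"
    by (simp add: mult.assoc)
  also have "\<dots> = b * a * c"
    using b(2,3) c(3) by (metis mult.assoc)
  finally have bac: "b = b * a * c" .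
  have "c = invol (c * a) * c"
    using c(2,4) by simp
  also have "\<dots> = invol (c * a * b * a) * c"
    using b(1) by (simp add: mult.assoc)
  also have "\<dots> = invol (b * a) * invol (c * a) * c"
    by (simp add: mult.assoc)
  also have "\<dots> = b * a * c"
    using c(2) b(4) c(4) by (metis mult.assoc)
  finally show ?thesis
    using bac by simp
qed

lemma group_inverse_unique:
  assumes "m * y = y * m" "m * y * m = m" "y * m * y = y"
    and "m * z = z * m" "m * z * m = m" "z * m * z = z"
  shows "y = z"
proof -
  have "y * m = y * m * (z * m)" and "m * z = m * y * (m * z)"
    using assms(2,5) by (metis mult.assoc)+
  then have ym: "y * m = z * m"
    using assms(1,4) by (metis mult.assoc)
  have "y = y * (m * y)"
    using assms(3) by (simp add: mult.assoc)
  also have "\<dots> = z * m * z"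
    using ym assms(1,4) by (metis mult.assoc)
  finally show ?thesis
    using assms(6) by simp
qed

lemma self_adjoint_MP_invertible_iff_14:
  assumes "invol m = m"
  shows "MP_invertible m \<longleftrightarrow> has_14_inverse m"
  using assms MP_invertible_iff_13_14 has_13_inverse_iff_invol by auto

text \<open>The MP inverse of a self-adjoint element is self-adjoint, hence commutes with it.\<close>

lemma self_adjoint_MP_invertible_imp_commuting:
  assumes "invol m = m" and "MP_invertible m"
  shows "has_commuting_inner_inverse m"
proof -
  obtain b where b: "MP_inverse m b"
    using assms(2) unfolding MP_invertible_def by blast
  then have b1: "m * b * m = m" and b2: "b * m * b = b" and b3: "invol (m * b) = m * b"
    and b4: "invol (b * m) = b * m"
    unfolding MP_inverse_def by auto
  have "m * invol b * m = m" "invol b * m * invol b = invol b"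
    using arg_cong[OF b1, of invol] arg_cong[OF b2, of invol] assms(1) by (simp_all add: mult.assoc)
  moreover have "invol (m * invol b) = m * invol b" "invol (invol b * m) = invol b * m"
    using b3 b4 assms(1) by simp_all
  ultimately have "MP_inverse m (invol b)"
    unfolding MP_inverse_def by blast
  then have "invol b = b"
    using MP_inverse_unique b by blast
  then have "m * b = b * m"
    using b3 assms(1) by simp
  then show ?thesis
    unfolding has_commuting_inner_inverse_def using b1 by blast
qed

text \<open>The group inverse z m z of a self-adjoint m is self-adjoint by uniqueness, and is a
  {1,4}-inverse.\<close>

lemma self_adjoint_commuting_imp_14:
  assumes "invol m = m" and "has_commuting_inner_inverse m"
  shows "has_14_inverse m"
proof -
  obtain z where z: "m * z = z * m" "m * z * m = m"
    using assms(2) unfolding has_commuting_inner_inverse_def by blast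
  define w where "w = z * m * z"
  have w1: "m * w = w * m" and w2: "m * w * m = m" and w3: "w * m * w = w"
    unfolding w_def using z by (metis mult.assoc)+
  have "m * invol w = invol w * m" "m * invol w * m = m" "invol w * m * invol w = invol w"
    using arg_cong[OF w1, of invol] arg_cong[OF w2, of invol] arg_cong[OF w3, of invol] assms(1)
    by (simp_all add: mult.assoc)
  then have "invol w = w"
    using group_inverse_unique w1 w2 w3 by blast
  then have "invol (w * m) = w * m"
    using assms(1) w1 by simp
  then show ?thesis
    unfolding has_14_inverse_def using w2 by blast
qed

lemma self_adjoint_MP_invertible_iff_commuting:
  assumes "invol m = m"
  shows "MP_invertible m \<longleftrightarrow> has_commuting_inner_inverse m"
  using assms self_adjoint_MP_invertible_imp_commuting self_adjoint_commuting_imp_14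
    self_adjoint_MP_invertible_iff_14 by blast

text \<open>Jacobson's lemma: if z is a commuting inner inverse of A = 1 - x y, then 1 + y z x is one
  of B = 1 - y x.\<close>

lemma has_commuting_inner_inverse_1_minus_swap:
  assumes "has_commuting_inner_inverse (1 - x * y)"
  shows "has_commuting_inner_inverse (1 - y * x)"
proof -
  define A where "A = 1 - x * y"
  define B where "B = 1 - y * x"
  obtain z where z: "A * z = z * A" "A * z * A = A"
    using assms unfolding has_commuting_inner_inverse_def A_def by blast
  define w where "w = 1 + y * z * x"
  have yA: "B * y = y * A" and Ax: "x * B = A * x" and BB: "B * B = B - y * A * x"
    unfolding A_def B_def by (simp_all add: algebra_simps)
  have Bw: "B * w = B + y * A * z * x"
    unfolding w_def using yA by (simp add: algebra_simps) (metis mult.assoc)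
  have wB: "w * B = B + y * z * A * x"
    unfolding w_def using Ax by (simp add: algebra_simps)
  have "B * w * B = B * B + y * A * z * (x * B)"
    using Bw by (simp add: algebra_simps)
  also have "\<dots> = B - y * A * x + y * (A * z * A) * x"
    using BB Ax by (simp add: mult.assoc)
  also have "\<dots> = B"
    using z(2) by simp
  finally have "B * w * B = B" .
  moreover have "B * w = w * B"
    using Bw wB z(1) by (metis mult.assoc)
  ultimately show ?thesis
    unfolding has_commuting_inner_inverse_def B_def by blast
qed

lemma has_commuting_inner_inverse_corner_iff:
  assumes "p * p = p" and "p * a = a" and "a * p = a"
  shows "has_commuting_inner_inverse (1 - p + a) \<longleftrightarrow> has_commuting_inner_inverse a"
proof
  let ?m = "1 - p + a"
  have pm: "p * ?m = a" and mp: "?m * p = a"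
    using assms by (simp_all add: algebra_simps)
  assume "has_commuting_inner_inverse ?m"
  then obtain z where z: "?m * z = z * ?m" "?m * z * ?m = ?m"
    unfolding has_commuting_inner_inverse_def by blast
  have "a * (p * z * p) * a = p * (?m * z * ?m) * p"
    using assms pm mp by (metis mult.assoc)
  also have "\<dots> = a"
    using z(2) pm assms by (metis mult.assoc)
  finally have "a * (p * z * p) * a = a" .
  moreover have "a * (p * z * p) = p * (?m * z) * p"
    using assms(3) pm by (metis mult.assoc)
  moreover have "p * (z * ?m) * p = (p * z * p) * a"
    using mp assms by (metis mult.assoc)
  ultimately show "has_commuting_inner_inverse a"
    unfolding has_commuting_inner_inverse_def using z(1) by metis
next
  assume "has_commuting_inner_inverse a"
  then obtain w where w: "a * w = w * a" "a * w * a = a"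
    unfolding has_commuting_inner_inverse_def by blast
  define v where "v = p * w * p"
  have pv: "p * v = v" and vp: "v * p = v"
    unfolding v_def using assms(1) by (metis mult.assoc)+
  have av: "a * v = w * a" and va: "v * a = w * a"
    unfolding v_def using assms w(1) by (metis mult.assoc)+
  have ava: "a * (v * a) = a" and avp: "a * (v * p) = a * v"
    using va w vp by (metis mult.assoc)+
  define z where "z = 1 - p + v"
  have left: "(1 - p + a) * z = 1 - p + a * v"
    unfolding z_def using assms pv by (simp add: algebra_simps)
  have right: "z * (1 - p + a) = 1 - p + v * a"
    unfolding z_def using assms vp by (simp add: algebra_simps)
  have "(1 - p + a * v) * (1 - p + a) = 1 - p + a"
    using assms avp ava by (simp add: algebra_simps)
  then show "has_commuting_inner_inverse (1 - p + a)"
    unfolding has_commuting_inner_inverse_def using left right av va by metis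
qed

lemma projection_mult_left_absorb:
  assumes "projection p"
  shows "p * (p * y) = p * y"
  using assms unfolding projection_def by (simp add: mult.assoc[symmetric])

lemma MP_invertible_1_minus_pqp_iff_qpq:
  assumes "projection p" and "projection q"
  shows "MP_invertible (1 - p * q * p) \<longleftrightarrow> MP_invertible (1 - q * p * q)"
proof -
  have "1 - p * q * p = 1 - (p * q) * (q * p)" and "1 - q * p * q = 1 - (q * p) * (p * q)"
    using assms by (simp_all add: mult.assoc projection_mult_left_absorb)
  moreover have "invol (1 - p * q * p) = 1 - p * q * p" and "invol (1 - q * p * q) = 1 - q * p * q"
    using assms unfolding projection_def by (simp_all add: mult.assoc)
  ultimately show ?thesis
    using self_adjoint_MP_invertible_iff_commuting has_commuting_inner_inverse_1_minus_swap
    by metis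
qed

text \<open>The unit 1 - p q + p q p carries 1 - p q p to 1 - p q.\<close>

lemma has_14_inverse_1_minus_pq_iff:
  assumes "projection p" and "projection q"
  shows "has_14_inverse (1 - p * q) \<longleftrightarrow> MP_invertible (1 - p * q * p)"
proof -
  have pp: "p * (p * y) = p * y" for y
    using assms(1) by (rule projection_mult_left_absorb)
  have "(1 + p * q - p * q * p) * (1 - p * q + p * q * p) = 1"
    and "(1 - p * q + p * q * p) * (1 + p * q - p * q * p) = 1"
    and factor: "(1 - p * q + p * q * p) * (1 - p * q * p) = 1 - p * q"
    by (simp_all add: algebra_simps mult.assoc pp)
  moreover have "invol (1 - p * q * p) = 1 - p * q * p"
    using assms unfolding projection_def by (simp add: mult.assoc)
  ultimately show ?thesis
    using has_14_inverse_unit_mult_iff self_adjoint_MP_invertible_iff_14 by metis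
qed

lemma MP_invertible_1_minus_pq_iff:
  assumes "projection p" and "projection q"
  shows "MP_invertible (1 - p * q) \<longleftrightarrow> MP_invertible (1 - p * q * p) \<and> MP_invertible (1 - q * p * q)"
proof -
  have "has_13_inverse (1 - p * q) \<longleftrightarrow> has_14_inverse (1 - q * p)"
    using assms has_13_inverse_iff_invol[of "1 - p * q"] unfolding projection_def by simp
  then show ?thesis
    using MP_invertible_iff_13_14 has_14_inverse_1_minus_pq_iff assms by blast
qed

lemma MP_invertible_1_minus_pqp_iff_corner:
  assumes "projection p" and "projection q"
  shows "MP_invertible (1 - p * q * p) \<longleftrightarrow> MP_invertible (p - p * q * p)"
proof -
  have p: "p * p = p" "invol p = p" and q: "invol q = q"
    using assms unfolding projection_def by auto
  have pp: "p * (p * y) = p * y" for y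
    using assms(1) by (rule projection_mult_left_absorb)
  have "1 - p * q * p = 1 - p + (p - p * q * p)"
    by (simp add: algebra_simps)
  moreover have "p * (p - p * q * p) = p - p * q * p" and "(p - p * q * p) * p = p - p * q * p"
    by (simp_all add: algebra_simps mult.assoc p pp)
  moreover have "invol (1 - p * q * p) = 1 - p * q * p" and "invol (p - p * q * p) = p - p * q * p"
    using p q by (simp_all add: mult.assoc)
  ultimately show ?thesis
    using self_adjoint_MP_invertible_iff_commuting has_commuting_inner_inverse_corner_iff[OF p(1)]
    by metis
qed

end

theorem theorem2p4:
  fixes p q :: "'a :: ring_invol"
  assumes "projection p" and "projection q"
  shows "(MP_invertible (1 - p * q) \<longleftrightarrow> MP_invertible (1 - p * q * p))
       \<and> (MP_invertible (1 - p * q * p) \<longleftrightarrow> MP_invertible (p - p * q * p))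
       \<and> (MP_invertible (p - p * q * p) \<longleftrightarrow> MP_invertible (1 - q * p))
       \<and> (MP_invertible (1 - q * p) \<longleftrightarrow> MP_invertible (1 - q * p * q))
       \<and> (MP_invertible (1 - q * p * q) \<longleftrightarrow> MP_invertible (q - q * p * q))"
proof -
  have "invol (1 - p * q) = 1 - q * p"
    using assms unfolding projection_def by simp
  then have adjoint: "MP_invertible (1 - q * p) \<longleftrightarrow> MP_invertible (1 - p * q)"
    using MP_invertible_invol_iff by metis
  show ?thesis
    using adjoint MP_invertible_1_minus_pq_iff[OF assms] MP_invertible_1_minus_pq_iff[OF assms(2,1)]
      MP_invertible_1_minus_pqp_iff_qpq[OF assms]
      MP_invertible_1_minus_pqp_iff_corner[OF assms] MP_invertible_1_minus_pqp_iff_corner[OF assms(2,1)]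
    by blast
qed

end
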